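(* Let $v,k$ be positive integers with $k\mid v$ and $v\mid k^2$, and put $\lambda=k^2/v$. In $\mathbb{Z}_v$ let $A_X=\{0,1,\dots,k-1\}$ and $A_Y=\{ak, ak+1,\dots, ak+\lambda-1 : a=0,1,\dots,\tfrac{v}{k}-1\}$. Then (i) $\{A_X,A_Y\}$ is a $(v,2,k,\lambda)$-PSEDF in $\mathbb{Z}_v$, and (ii) $\{A_X,A_Y\}$ is a non-disjoint $(v,2,k,\lambda)$-SEDF in $\mathbb{Z}_v$.
   Context: Groups are written additively. For subsets $A,B$ of a group $G$, $\Delta(A,B)$ is the multiset $\{a-b:a\in A,b\in B\}$ and $\lambda G$ is the multiset with each element of $G$ exactly $\lambda$ times. For $G$ of order $v$ and $m>1$, a family of $k$-subsets $\{A_1,\dots,A_m\}$ of $G$ is a $(v,m,k,\lambda)$-PSEDF if $\Delta(A_i,A_j)=\lambda G$ for every $i\neq j$; it is a non-disjoint $(v,m,k,\lambda)$-SEDF if for each $i$ the multiset union $\bigcup_{j\neq i}\Delta(A_i,A_j)$ equals $\lambda G$. The sets need not be disjoint. *)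

theory Defs
  imports Main "HOL-Library.Multiset"
begin

text \<open>An additive abelian group is represented by its carrier G and its
  subtraction operation sub (so that the difference a - b is sub a b).\<close>

definition Delta :: "('a \<Rightarrow> 'a \<Rightarrow> 'a) \<Rightarrow> 'a set \<Rightarrow> 'a set \<Rightarrow> 'a multiset" where
  "Delta sub A B = image_mset (\<lambda>(a, b). sub a b) (mset_set (A \<times> B))"

definition lam_G :: "nat \<Rightarrow> 'a set \<Rightarrow> 'a multiset" where
  "lam_G lam G = repeat_mset lam (mset_set G)"

text \<open>A family A_0, ..., A_(m-1) of k-subsets of G (indexed, sets need not be disjoint).\<close>
definition is_PSEDF :: "'a set \<Rightarrow> ('a \<Rightarrow> 'a \<Rightarrow> 'a) \<Rightarrow> nat \<Rightarrow> nat \<Rightarrow> nat \<Rightarrow> nat \<Rightarrow> (nat \<Rightarrow> 'a set) \<Rightarrow> bool" where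
  "is_PSEDF G sub v m k lam A \<longleftrightarrow>
     finite G \<and> card G = v \<and> m > 1 \<and>
     (\<forall>i<m. A i \<subseteq> G \<and> card (A i) = k) \<and>
     (\<forall>i<m. \<forall>j<m. i \<noteq> j \<longrightarrow> Delta sub (A i) (A j) = lam_G lam G)"

definition is_SEDF :: "'a set \<Rightarrow> ('a \<Rightarrow> 'a \<Rightarrow> 'a) \<Rightarrow> nat \<Rightarrow> nat \<Rightarrow> nat \<Rightarrow> nat \<Rightarrow> (nat \<Rightarrow> 'a set) \<Rightarrow> bool" where
  "is_SEDF G sub v m k lam A \<longleftrightarrow>
     finite G \<and> card G = v \<and> m > 1 \<and>
     (\<forall>i<m. A i \<subseteq> G \<and> card (A i) = k) \<and>
     (\<forall>i<m. (\<Sum>j\<in>{..<m} - {i}. Delta sub (A i) (A j)) = lam_G lam G)"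

definition Zv :: "nat \<Rightarrow> int set" where
  "Zv v = {0..<int v}"

definition Zv_sub :: "nat \<Rightarrow> int \<Rightarrow> int \<Rightarrow> int" where
  "Zv_sub v a b = (a - b) mod int v"

end

theory Submission imports Defs begin

text \<open>Reduction modulo k is well defined on \<open>\<int>\<^sub>v\<close> because k divides v, and \<open>A\<^sub>Y\<close> is exactly
  the set of residues whose reduction modulo k lies below \<open>\<lambda>\<close>. Since \<open>A\<^sub>X = {0, ..., k-1}\<close>
  is a complete system of residues modulo k, every translate \<open>A\<^sub>X - g\<close> meets \<open>A\<^sub>Y\<close> in exactly
  \<open>\<lambda>\<close> points, so every g occurs \<open>\<lambda>\<close> times in \<open>\<Delta>(A\<^sub>X, A\<^sub>Y)\<close>; and \<open>\<Delta>(A\<^sub>Y, A\<^sub>X) = -\<Delta>(A\<^sub>X, A\<^sub>Y)\<close>.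
  With only two sets the PSEDF and SEDF conditions coincide.\<close>

lemma is_SEDF_2_iff_is_PSEDF:
  "is_SEDF G sub v 2 k lam A \<longleftrightarrow> is_PSEDF G sub v 2 k lam A"
proof -
  have "{..<2::nat} - {0} = {1}" "{..<2::nat} - {1} = {0}" by auto
  then show ?thesis
    unfolding is_SEDF_def is_PSEDF_def by (auto simp: less_2_cases_iff)
qed

lemma is_PSEDF_2_iff:
  "is_PSEDF G sub v 2 k lam A \<longleftrightarrow>
     finite G \<and> card G = v \<and> A 0 \<subseteq> G \<and> A 1 \<subseteq> G \<and> card (A 0) = k \<and> card (A 1) = k \<and>
     Delta sub (A 0) (A 1) = lam_G lam G \<and> Delta sub (A 1) (A 0) = lam_G lam G"
  unfolding is_PSEDF_def by (auto simp: less_2_cases_iff)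

lemma count_Delta:
  assumes "finite A" "finite B"
  shows "count (Delta sub A B) g = card {(a, b) \<in> A \<times> B. sub a b = g}"
proof -
  have "count (Delta sub A B) g =
      (\<Sum>p | p \<in># mset_set (A \<times> B) \<and> g = (\<lambda>(a, b). sub a b) p. count (mset_set (A \<times> B)) p)"
    unfolding Delta_def by (rule count_image_mset')
  also have "\<dots> = (\<Sum>p | p \<in> A \<times> B \<and> g = (\<lambda>(a, b). sub a b) p. 1)"
    using assms by (intro sum.cong) auto
  also have "\<dots> = card {(a, b) \<in> A \<times> B. sub a b = g}"
    by (auto intro!: arg_cong[where f = card])
  finally show ?thesis .
qed

lemma Delta_swap:
  assumes "finite A" "finite B" "\<And>a b. a \<in> A \<Longrightarrow> b \<in> B \<Longrightarrow> sub b a = neg (sub a b)"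
  shows "Delta sub B A = image_mset neg (Delta sub A B)"
proof -
  have "mset_set (B \<times> A) = image_mset prod.swap (mset_set (A \<times> B))"
    by (simp add: image_mset_mset_set product_swap)
  then have "Delta sub B A = image_mset (\<lambda>(a, b). sub b a) (mset_set (A \<times> B))"
    unfolding Delta_def by (simp add: multiset.map_comp comp_def split_def)
  also have "\<dots> = image_mset (\<lambda>(a, b). neg (sub a b)) (mset_set (A \<times> B))"
    using assms by (intro image_mset_cong) auto
  finally show ?thesis
    unfolding Delta_def by (simp add: multiset.map_comp comp_def split_def)
qed

lemma image_mset_lam_G:
  assumes "bij_betw f G G"
  shows "image_mset f (lam_G lam G) = lam_G lam G"
proof -
  have "image_mset f (mset_set G) = mset_set G"
    using assms by (simp add: bij_betw_def image_mset_mset_set)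
  then show ?thesis
    unfolding lam_G_def by (induction lam) auto
qed

lemma Zv_sub_swap: "Zv_sub v b a = Zv_sub v 0 (Zv_sub v a b)"
  unfolding Zv_sub_def by (simp add: mod_minus_eq)

lemma bij_betw_Zv_neg: "bij_betw (Zv_sub v 0) (Zv v) (Zv v)"
proof -
  have involution: "Zv_sub v 0 (Zv_sub v 0 x) = x" if "x \<in> Zv v" for x
    using that unfolding Zv_def Zv_sub_def by (simp add: mod_minus_eq)
  have "Zv_sub v 0 ` Zv v \<subseteq> Zv v"
    by (auto simp: Zv_def Zv_sub_def)
  with involution show ?thesis
    by (intro bij_betw_byWitness[where f' = "Zv_sub v 0"]) auto
qed

lemma Delta_Zv_swap_lam_G:
  assumes "finite X" "finite Y" "Delta (Zv_sub v) X Y = lam_G lam (Zv v)"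
  shows "Delta (Zv_sub v) Y X = lam_G lam (Zv v)"
proof -
  have "Delta (Zv_sub v) Y X = image_mset (Zv_sub v 0) (Delta (Zv_sub v) X Y)"
    using assms(1,2) by (rule Delta_swap) (rule Zv_sub_swap)
  then show ?thesis
    by (simp add: assms(3) image_mset_lam_G bij_betw_Zv_neg)
qed

lemma card_Zv_sub_eq:
  assumes "Y \<subseteq> Zv v" "g \<in> Zv v"
  shows "card {(x, y) \<in> X \<times> Y. Zv_sub v x y = g} = card {x \<in> X. (x - g) mod int v \<in> Y}"
proof -
  have mod_id: "y mod int v = y" if "y \<in> Y" for y
    using assms that by (auto simp: Zv_def)
  have "bij_betw (\<lambda>x. (x, (x - g) mod int v))
      {x \<in> X. (x - g) mod int v \<in> Y} {(x, y) \<in> X \<times> Y. Zv_sub v x y = g}"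
  proof (rule bij_betw_byWitness[where f' = fst])
    show "\<forall>p\<in>{(x, y) \<in> X \<times> Y. Zv_sub v x y = g}. (fst p, (fst p - g) mod int v) = p"
      using mod_id by (auto simp: Zv_sub_def mod_diff_right_eq)
    show "fst ` {(x, y) \<in> X \<times> Y. Zv_sub v x y = g} \<subseteq> {x \<in> X. (x - g) mod int v \<in> Y}"
      using mod_id by (auto simp: Zv_sub_def mod_diff_right_eq)
    show "(\<lambda>x. (x, (x - g) mod int v)) ` {x \<in> X. (x - g) mod int v \<in> Y}
        \<subseteq> {(x, y) \<in> X \<times> Y. Zv_sub v x y = g}"
      using assms(2) by (auto simp: Zv_def Zv_sub_def mod_diff_right_eq)
  qed auto
  then show ?thesis by (rule bij_betw_same_card[symmetric])
qed

lemma Delta_Zv_eq_lam_G: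
  assumes "finite X" "finite Y" "Y \<subseteq> Zv v" "v > 0"
    and translates: "\<And>g. g \<in> Zv v \<Longrightarrow> card {x \<in> X. (x - g) mod int v \<in> Y} = lam"
  shows "Delta (Zv_sub v) X Y = lam_G lam (Zv v)"
proof (rule multiset_eqI)
  fix g
  show "count (Delta (Zv_sub v) X Y) g = count (lam_G lam (Zv v)) g"
  proof (cases "g \<in> Zv v")
    case True
    then show ?thesis
      using assms card_Zv_sub_eq[OF assms(3) True]
      by (simp add: count_Delta lam_G_def Zv_def)
  next
    case False
    then have "{(x, y) \<in> X \<times> Y. Zv_sub v x y = g} = {}"
      using \<open>v > 0\<close> by (auto simp: Zv_def Zv_sub_def)
    then have "count (Delta (Zv_sub v) X Y) g = 0"
      by (simp only: count_Delta[OF assms(1,2)] card.empty)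
    then show ?thesis
      using False by (simp add: lam_G_def Zv_def)
  qed
qed

lemma card_complete_residues_mod_less:
  fixes k c :: int
  assumes "0 < k" "int lam \<le> k"
  shows "card {x \<in> {0..<k}. (x + c) mod k < int lam} = lam"
proof -
  let ?f = "\<lambda>x. (x + c) mod k"
  have inj: "inj_on ?f {0..<k}"
  proof (rule inj_onI)
    fix x y assume "x \<in> {0..<k}" "y \<in> {0..<k}" "(x + c) mod k = (y + c) mod k"
    then have "x mod k = y mod k" by (metis add_diff_cancel_right' mod_diff_left_eq)
    with \<open>x \<in> {0..<k}\<close> \<open>y \<in> {0..<k}\<close> show "x = y" by simp
  qed
  then have onto: "?f ` {0..<k} = {0..<k}"
    using assms by (intro endo_inj_surj) auto
  have "card {x \<in> {0..<k}. ?f x < int lam} = card (?f ` {x \<in> {0..<k}. ?f x < int lam})"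
    by (rule card_image[symmetric]) (rule inj_on_subset[OF inj], auto)
  also have "?f ` {x \<in> {0..<k}. ?f x < int lam} = {z \<in> ?f ` {0..<k}. z < int lam}"
    by auto
  also have "\<dots> = {0..<int lam}"
    using onto assms by auto
  finally show ?thesis by simp
qed

lemma blocks_eq_mod_less:
  assumes "lam \<le> k"
  shows "{int (a * k + t) | a t. a < n \<and> t < lam} = {y \<in> {0..<int (n * k)}. y mod int k < int lam}"
proof (intro equalityI subsetI)
  fix y assume "y \<in> {int (a * k + t) | a t. a < n \<and> t < lam}"
  then obtain a t where y: "y = int (a * k + t)" "a < n" "t < lam" by blast
  have "a * k + t < (a + 1) * k" using y assms by simp
  also have "\<dots> \<le> n * k" using y by (intro mult_right_mono) auto
  finally have "a * k + t < n * k" .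
  then have "y < int (n * k)" using y by (simp only: of_nat_less_iff)
  moreover have "(a * k + t) mod k = t" using y assms by simp
  then have "y mod int k = int t" using y by (metis of_nat_mod)
  ultimately show "y \<in> {y \<in> {0..<int (n * k)}. y mod int k < int lam}"
    using y by simp
next
  fix y assume "y \<in> {y \<in> {0..<int (n * k)}. y mod int k < int lam}"
  then have y: "0 \<le> y" "y < int (n * k)" "y mod int k < int lam" by auto
  then obtain m where m: "y = int m" using nonneg_int_cases by blast
  with y have "m < n * k" "m mod k < lam" by (simp_all flip: of_nat_mod of_nat_mult)
  moreover from \<open>m mod k < lam\<close> have "0 < k" using assms by (cases "k = 0") auto
  ultimately have "m div k < n" by (simp add: div_less_iff_less_mult)
  moreover have "y = int (m div k * k + m mod k)" using m by simp
  ultimately show "y \<in> {int (a * k + t) | a t. a < n \<and> t < lam}"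
    using \<open>m mod k < lam\<close> by blast
qed

lemma card_blocks:
  assumes "lam \<le> k"
  shows "card {int (a * k + t) | a t. a < n \<and> t < lam} = n * lam"
proof -
  let ?f = "\<lambda>(a, t). int (a * k + t)"
  have "inj_on ?f ({..<n} \<times> {..<lam})"
  proof (rule inj_onI, clarify)
    fix a t a' t' assume at: "a < n" "t < lam" "a' < n" "t' < lam"
      and "int (a * k + t) = int (a' * k + t')"
    then have sum_eq: "a * k + t = a' * k + t'" by (simp only: of_nat_eq_iff)
    have "(a * k + t) div k = a" "(a * k + t) mod k = t"
      "(a' * k + t') div k = a'" "(a' * k + t') mod k = t'"
      using at assms by auto
    then show "a = a' \<and> t = t'" using sum_eq by metis
  qed
  moreover have "{int (a * k + t) | a t. a < n \<and> t < lam} = ?f ` ({..<n} \<times> {..<lam})"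
    by auto
  ultimately show ?thesis by (simp add: card_image)
qed

theorem theorem3p1:
  fixes v k :: nat
  assumes "0 < v" and "0 < k" and "k dvd v" and "v dvd k ^ 2"
  defines "lam \<equiv> k ^ 2 div v"
  defines "AX \<equiv> {0..<int k}"
  defines "AY \<equiv> {int (a * k + t) | a t. a < v div k \<and> t < lam}"
  defines "A \<equiv> (\<lambda>i::nat. if i = 0 then AX else AY)"
  shows "is_PSEDF (Zv v) (Zv_sub v) v 2 k lam A \<and> is_SEDF (Zv v) (Zv_sub v) v 2 k lam A"
proof -
  define n where "n = v div k"
  have v_eq: "v = n * k" using assms(3) n_def by simp
  have "k * k = v * lam" using assms(4) lam_def by (simp add: power2_eq_square)
  then have k_eq: "k = n * lam" using v_eq assms(2) by simp
  then have "lam \<le> k" "k \<le> v" using assms(1,2) v_eq by auto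
  have AY_eq: "AY = {y \<in> Zv v. y mod int k < int lam}"
    unfolding AY_def Zv_def v_eq using blocks_eq_mod_less[OF \<open>lam \<le> k\<close>] assms(2) by simp
  have "card AY = k"
    unfolding AY_def n_def[symmetric] using card_blocks[OF \<open>lam \<le> k\<close>] k_eq by simp
  have sub: "AX \<subseteq> Zv v" "AY \<subseteq> Zv v"
    using \<open>k \<le> v\<close> AY_eq by (auto simp: AX_def Zv_def)
  have fin: "finite AX" "finite AY"
    using sub(2) finite_subset by (auto simp: AX_def Zv_def)
  have "z mod int v \<in> AY \<longleftrightarrow> z mod int k < int lam" for z
    using AY_eq \<open>0 < v\<close> mod_mod_cancel[of "int k" "int v"] assms(3) by (simp add: Zv_def)
  then have translates: "card {x \<in> AX. (x - g) mod int v \<in> AY} = lam" for g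
    using card_complete_residues_mod_less[of "int k" lam "- g"] \<open>lam \<le> k\<close> assms(2)
    by (simp add: AX_def)
  have XY: "Delta (Zv_sub v) AX AY = lam_G lam (Zv v)"
    using fin sub(2) \<open>0 < v\<close> translates by (rule Delta_Zv_eq_lam_G)
  have YX: "Delta (Zv_sub v) AY AX = lam_G lam (Zv v)"
    using fin XY by (rule Delta_Zv_swap_lam_G)
  have "card AX = k" "finite (Zv v)" "card (Zv v) = v"
    by (simp_all add: AX_def Zv_def)
  then show ?thesis
    using sub \<open>card AY = k\<close> XY YX
    unfolding is_SEDF_2_iff_is_PSEDF is_PSEDF_2_iff A_def by simp_all
qed

end
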